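(* Let $m,n,k$ be positive integers with $(m,k-1)=1$ and $n=\mathrm{ind}_m(k)$, let $G=G(m,n,k)=\langle a,b;\ a^m=1,\ b^n=1,\ b^{-1}ab=a^k\rangle$, let $S\subseteq\mathbb{Z}_m$ be a base, and suppose $\Sigma_G(S)$ is complete. Then $\Sigma_G(S)=\dot{\bigcup}_{x\in S^*}C(x,1)$ (a disjoint union) and $|\Sigma_G(S)|=m\,|S^*|$.
   Context: $\mathrm{ind}_m(k)$ is the least positive integer $d$ with $k^d\equiv 1\pmod m$. Every element of $G$ is written uniquely as $a^ib^j$ with $i\in\mathbb{Z}_m$, $j\in\mathbb{Z}_n$. For $t\ge 0$ let $k_t=k^t-1 \pmod m$. Maps are written on the right, and $\mu\circ\nu$ means "first $\mu$, then $\nu$". For $x,y\in\mathbb{Z}_m$ the mu-map $\mu(x,y):G\to G$ is $(a^ib^j)\mu(x,y)=a^{xik^j-yk_j}$. The container is $C(x,y)=\{\mu(x,yz): z\in\mathbb{Z}_m\}$. For $S\subseteq\mathbb{Z}_m$, $I(S)$ is the set of elements of $S$ invertible in $\mathbb{Z}_m$, and $S^*$ is the multiplicative subsemigroup of $\mathbb{Z}_m$ generated by $S$. A base is $S\subseteq\mathbb{Z}_m$ with $0\in S$ and $I(S)\neq\varnothing$. $\Sigma_G(S)$ is the semigroup under composition generated by $\{\mu(s,z): s\in S, z\in\mathbb{Z}_m\}$. For $x\in S^*$, $Y(x)=\{s^*z:\ s^*\in S^*, z\in\mathbb{Z}_m, \exists s\in S \text{ with } x\equiv ss^* \pmod m\}$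 and the $x$-family is $\mathcal{F}_G(x,S)=\{C(x,y): y\in Y(x)\}$. The $x$-family is complete if $C(x,1)\in\mathcal{F}_G(x,S)$, and $\Sigma_G(S)$ is complete if the $x$-family is complete for every $x\in S^*$. *)

theory Defs
  imports Main "HOL-Number_Theory.Cong" "HOL-Library.FuncSet" "HOL-Library.Disjoint_Sets"
begin

text \<open>The metacyclic group G(m,n,k) is represented by its normal forms a^i b^j,
  encoded as pairs (i, j) with 0 \<le> i < m, 0 \<le> j < n.\<close>

definition Gcar :: "int \<Rightarrow> nat \<Rightarrow> (int \<times> nat) set" where
  "Gcar m n = {0..<m} \<times> {0..<n}"

definition is_ind :: "int \<Rightarrow> int \<Rightarrow> nat \<Rightarrow> bool" where
  "is_ind m k n \<longleftrightarrow> 0 < n \<and> [k ^ n = 1] (mod m) \<and> (\<forall>d. 0 < d \<and> d < n \<longrightarrow> \<not> [k ^ d = 1] (mod m))"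

definition kk :: "int \<Rightarrow> int \<Rightarrow> nat \<Rightarrow> int" where
  "kk m k t = (k ^ t - 1) mod m"

text \<open>mu-map: (a^i b^j) mu(x,y) = a^(x i k^j - y k_j)\<close>
definition mu :: "int \<Rightarrow> nat \<Rightarrow> int \<Rightarrow> int \<Rightarrow> int \<Rightarrow> (int \<times> nat \<Rightarrow> int \<times> nat)" where
  "mu m n k x y = (\<lambda>(i, j) \<in> Gcar m n. ((x * i * k ^ j - y * kk m k j) mod m, 0))"

definition container :: "int \<Rightarrow> nat \<Rightarrow> int \<Rightarrow> int \<Rightarrow> int \<Rightarrow> (int \<times> nat \<Rightarrow> int \<times> nat) set" where
  "container m n k x y = {mu m n k x ((y * z) mod m) | z. z \<in> {0..<m}}"

definition is_base :: "int \<Rightarrow> int set \<Rightarrow> bool" where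
  "is_base m S \<longleftrightarrow> S \<subseteq> {0..<m} \<and> 0 \<in> S \<and> (\<exists>s\<in>S. coprime s m)"

inductive_set Sstar :: "int \<Rightarrow> int set \<Rightarrow> int set" for m S where
  gen: "s \<in> S \<Longrightarrow> s \<in> Sstar m S"
| mult: "a \<in> Sstar m S \<Longrightarrow> b \<in> Sstar m S \<Longrightarrow> (a * b) mod m \<in> Sstar m S"

text \<open>Sigma_G(S): semigroup under composition generated by the mu(s,z);
  compose first f then g is the map g \<circ> f on the carrier.\<close>
inductive_set Sigma :: "int \<Rightarrow> nat \<Rightarrow> int \<Rightarrow> int set \<Rightarrow> (int \<times> nat \<Rightarrow> int \<times> nat) set"
  for m n k S where
  gen: "s \<in> S \<Longrightarrow> z \<in> {0..<m} \<Longrightarrow> mu m n k s z \<in> Sigma m n k S"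
| comp: "f \<in> Sigma m n k S \<Longrightarrow> g \<in> Sigma m n k S \<Longrightarrow> compose (Gcar m n) g f \<in> Sigma m n k S"

definition Yset :: "int \<Rightarrow> int set \<Rightarrow> int \<Rightarrow> int set" where
  "Yset m S x = {(t * z) mod m | t z. t \<in> Sstar m S \<and> z \<in> {0..<m} \<and> (\<exists>s\<in>S. [x = s * t] (mod m))}"

definition family :: "int \<Rightarrow> nat \<Rightarrow> int \<Rightarrow> int set \<Rightarrow> int \<Rightarrow> (int \<times> nat \<Rightarrow> int \<times> nat) set set" where
  "family m n k S x = {container m n k x y | y. y \<in> Yset m S x}"

definition family_complete :: "int \<Rightarrow> nat \<Rightarrow> int \<Rightarrow> int set \<Rightarrow> int \<Rightarrow> bool" where
  "family_complete m n k S x \<longleftrightarrow> container m n k x 1 \<in> family m n k S x"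

definition Sigma_complete :: "int \<Rightarrow> nat \<Rightarrow> int \<Rightarrow> int set \<Rightarrow> bool" where
  "Sigma_complete m n k S \<longleftrightarrow> (\<forall>x \<in> Sstar m S. family_complete m n k S x)"

end

theory Submission
  imports Defs
begin

text \<open>Applying mu(c,d) and then mu(a,b) gives mu(ac,ad): the image of mu(c,d) lies in
  \<langle>a\<rangle>, where the b-exponent is 0 and the k_j-term vanishes.  Hence \<Sigma>_G(S) consists
  of maps mu(x,z) with x \<in> S^*.  Conversely, if y = t z' \<in> Y(x) with x = s t, then
  mu(x, y w) is mu(s, z' w) followed by some mu(t, y') \<in> \<Sigma>_G(S), so C(x,y) \<subseteq> \<Sigma>_G(S),
  and completeness gives C(x,1) \<subseteq> \<Sigma>_G(S).  Finally (x,z) \<mapsto> mu(x,z) is injective on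
  Z_m \<times> Z_m, which yields both the disjointness and the count: evaluating at a recovers x,
  and evaluating at b recovers z(k-1), hence z, as k-1 is invertible modulo m.\<close>

lemma mu_mod: "mu m n k (x mod m) (y mod m) = mu m n k x y"
proof -
  have "[(x mod m) * i * k ^ j - (y mod m) * kk m k j = x * i * k ^ j - y * kk m k j] (mod m)"
    for i j by (intro cong_diff cong_mult cong_refl) (simp_all add: cong_def)
  then show ?thesis
    unfolding mu_def cong_def by simp
qed

lemma compose_mu:
  assumes "0 < m" "0 < n"
  shows "compose (Gcar m n) (mu m n k a b) (mu m n k c d) = mu m n k (a * c) (a * d)"
proof
  fix p :: "int \<times> nat"
  obtain i j where p: "p = (i, j)" by fastforce
  show "compose (Gcar m n) (mu m n k a b) (mu m n k c d) p = mu m n k (a * c) (a * d) p"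
  proof (cases "p \<in> Gcar m n")
    case True
    define v where "v = (c * i * k ^ j - d * kk m k j) mod m"
    have "(v, 0) \<in> Gcar m n"
      using assms unfolding v_def Gcar_def by simp
    have "compose (Gcar m n) (mu m n k a b) (mu m n k c d) p = mu m n k a b (v, 0)"
      using True unfolding compose_def mu_def v_def p by simp
    also have "\<dots> = ((a * v) mod m, 0)"
      using \<open>(v, 0) \<in> Gcar m n\<close> unfolding mu_def by (simp add: kk_def)
    also have "(a * v) mod m = (a * c * i * k ^ j - a * d * kk m k j) mod m"
      unfolding v_def by (simp add: mod_simps algebra_simps)
    also have "((a * c * i * k ^ j - a * d * kk m k j) mod m, 0) = mu m n k (a * c) (a * d) p"
      using True unfolding mu_def p by simp
    finally show ?thesis .
  next
    case False
    then show ?thesis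
      unfolding compose_def mu_def by simp
  qed
qed

lemma Sstar_subset:
  assumes "S \<subseteq> {0..<m}" "0 < m"
  shows "Sstar m S \<subseteq> {0..<m}"
proof
  fix x assume "x \<in> Sstar m S"
  then show "x \<in> {0..<m}"
    by induction (use assms in auto)
qed

lemma container_1: "container m n k x 1 = mu m n k x ` {0..<m}"
  unfolding container_def by force

lemma Sigma_subset_mu_image:
  assumes "0 < m" "0 < n"
  shows "Sigma m n k S \<subseteq> case_prod (mu m n k) ` (Sstar m S \<times> {0..<m})"
proof
  fix f assume "f \<in> Sigma m n k S"
  then show "f \<in> case_prod (mu m n k) ` (Sstar m S \<times> {0..<m})"
  proof induction
    case (gen s z)
    then show ?case
      by (force intro: Sstar.gen)
  next
    case (comp f g)
    from comp.IH(1) obtain x z where "x \<in> Sstar m S" "z \<in> {0..<m}" "f = mu m n k x z"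
      by auto
    moreover from comp.IH(2) obtain x' z' where "x' \<in> Sstar m S" "g = mu m n k x' z'"
      by auto
    ultimately have "compose (Gcar m n) g f = mu m n k ((x' * x) mod m) ((x' * z) mod m)"
      and "(x' * x) mod m \<in> Sstar m S" "(x' * z) mod m \<in> {0..<m}"
      using assms by (simp_all add: compose_mu mu_mod Sstar.mult)
    then show ?case
      by (auto intro!: image_eqI[where x = "((x' * x) mod m, (x' * z) mod m)"])
  qed
qed

lemma Sstar_ex_mu_in_Sigma:
  assumes "t \<in> Sstar m S" "0 < m" "0 < n"
  shows "\<exists>y. mu m n k t y \<in> Sigma m n k S"
  using assms(1)
proof induction
  case (gen s)
  then show ?case
    using assms(2) by (intro exI[of _ 0] Sigma.gen) auto
next
  case (mult a b)
  then obtain y y' where "mu m n k a y \<in> Sigma m n k S" "mu m n k b y' \<in> Sigma m n k S"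
    by blast
  then have "compose (Gcar m n) (mu m n k a y) (mu m n k b y') \<in> Sigma m n k S"
    by (rule Sigma.comp[rotated])
  then have "mu m n k ((a * b) mod m) ((a * y') mod m) \<in> Sigma m n k S"
    by (simp add: compose_mu assms mu_mod)
  then show ?case by blast
qed

lemma container_subset_Sigma:
  assumes "0 < m" "0 < n" "y \<in> Yset m S x"
  shows "container m n k x y \<subseteq> Sigma m n k S"
proof
  fix f assume "f \<in> container m n k x y"
  then obtain w where f: "f = mu m n k x ((y * w) mod m)"
    unfolding container_def by blast
  obtain t z s where y: "y = (t * z) mod m" and "t \<in> Sstar m S" "z \<in> {0..<m}" "s \<in> S"
    and x: "[x = s * t] (mod m)"
    using assms(3) unfolding Yset_def by blast
  obtain y' where "mu m n k t y' \<in> Sigma m n k S"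
    using Sstar_ex_mu_in_Sigma[OF \<open>t \<in> Sstar m S\<close> assms(1,2)] by blast
  moreover have "mu m n k s ((z * w) mod m) \<in> Sigma m n k S"
    using \<open>s \<in> S\<close> assms(1) by (intro Sigma.gen) auto
  ultimately have "compose (Gcar m n) (mu m n k t y') (mu m n k s ((z * w) mod m)) \<in> Sigma m n k S"
    by (rule Sigma.comp[rotated])
  moreover have "compose (Gcar m n) (mu m n k t y') (mu m n k s ((z * w) mod m)) = f"
  proof -
    have "(t * s) mod m = x mod m" "(t * ((z * w) mod m)) mod m = ((y * w) mod m) mod m"
      using x unfolding y cong_def by (simp_all add: mod_simps ac_simps)
    then show ?thesis
      unfolding f compose_mu[OF assms(1,2)] by (metis mu_mod)
  qed
  ultimately show "f \<in> Sigma m n k S" by simp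
qed

lemma Sigma_eq_mu_image_if_complete:
  assumes "0 < m" "0 < n" "Sigma_complete m n k S"
  shows "Sigma m n k S = case_prod (mu m n k) ` (Sstar m S \<times> {0..<m})"
proof
  show "case_prod (mu m n k) ` (Sstar m S \<times> {0..<m}) \<subseteq> Sigma m n k S"
  proof clarify
    fix x z assume "x \<in> Sstar m S" "z \<in> {0..<m}"
    then obtain y where "y \<in> Yset m S x" "container m n k x 1 = container m n k x y"
      using assms(3) unfolding Sigma_complete_def family_complete_def family_def by auto
    then have "container m n k x 1 \<subseteq> Sigma m n k S"
      using container_subset_Sigma[OF assms(1,2)] by simp
    then show "mu m n k x z \<in> Sigma m n k S"
      using \<open>z \<in> {0..<m}\<close> unfolding container_1 by blast
  qed
qed (rule Sigma_subset_mu_image[OF assms(1,2)])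

lemma is_ind_ge_2:
  assumes "1 < m" "coprime m (k - 1)" "is_ind m k n"
  shows "2 \<le> n"
proof (rule ccontr)
  assume "\<not> 2 \<le> n"
  with assms(3) have "n = 1"
    by (simp add: is_ind_def)
  with assms(3) have "[k = 1] (mod m)"
    by (simp add: is_ind_def)
  then have "m dvd k - 1"
    by (simp add: cong_iff_dvd_diff)
  then have "\<bar>m\<bar> = 1"
    using coprime_common_divisor_int[OF assms(2) dvd_refl] by simp
  with assms(1) show False
    by simp
qed

lemma inj_on_mu:
  assumes "0 < m" "coprime m (k - 1)" "is_ind m k n"
  shows "inj_on (case_prod (mu m n k)) ({0..<m} \<times> {0..<m})"
proof (cases "m = 1")
  case True
  then show ?thesis by (simp add: inj_on_def)
next
  case False
  with assms have "2 \<le> n"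
    by (intro is_ind_ge_2) auto
  with assms(1) False have a: "(1, 0) \<in> Gcar m n" and b: "(0, 1) \<in> Gcar m n"
    by (auto simp: Gcar_def)
  show ?thesis
  proof (rule inj_onI, clarify)
    fix x z x' z' :: int
    assume ranges: "x \<in> {0..<m}" "z \<in> {0..<m}" "x' \<in> {0..<m}" "z' \<in> {0..<m}"
      and eq: "mu m n k x z = mu m n k x' z'"
    have "x mod m = x' mod m"
      using fun_cong[OF eq, of "(1, 0)"] a unfolding mu_def by (simp add: kk_def)
    moreover have "(- (z * ((k - 1) mod m))) mod m = (- (z' * ((k - 1) mod m))) mod m"
      using fun_cong[OF eq, of "(0, 1)"] b unfolding mu_def kk_def by simp
    then have "[z * (k - 1) = z' * (k - 1)] (mod m)"
      unfolding cong_def by (metis mod_minus_cong mod_mult_right_eq minus_minus)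
    then have "[z = z'] (mod m)"
      using assms(2) by (simp add: cong_mult_rcancel coprime_commute)
    ultimately show "x = x' \<and> z = z'"
      using ranges by (simp add: cong_def)
  qed
qed

lemma disjoint_family_on_images_if_inj_on:
  assumes "inj_on (case_prod f) (A \<times> B)"
  shows "disjoint_family_on (\<lambda>x. f x ` B) A"
  using assms unfolding disjoint_family_on_def inj_on_def by fastforce

theorem theorem4p8:
  fixes m k :: int and n :: nat and S :: "int set"
  assumes "0 < m" and "0 < k" and "coprime m (k - 1)"
    and "is_ind m k n"
    and "is_base m S"
    and "Sigma_complete m n k S"
  shows "Sigma m n k S = (\<Union>x \<in> Sstar m S. container m n k x 1) \<and>
         disjoint_family_on (\<lambda>x. container m n k x 1) (Sstar m S) \<and>
         card (Sigma m n k S) = nat m * card (Sstar m S)"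
proof -
  have "0 < n"
    using assms(4) by (simp add: is_ind_def)
  have Sstar: "Sstar m S \<subseteq> {0..<m}"
    using Sstar_subset assms(1,5) by (simp add: is_base_def)
  have Sigma_eq: "Sigma m n k S = case_prod (mu m n k) ` (Sstar m S \<times> {0..<m})"
    using Sigma_eq_mu_image_if_complete[OF assms(1) \<open>0 < n\<close> assms(6)] .
  have inj: "inj_on (case_prod (mu m n k)) (Sstar m S \<times> {0..<m})"
    using Sstar by (intro inj_on_subset[OF inj_on_mu[OF assms(1,3,4)]]) auto
  have "card (Sigma m n k S) = card (Sstar m S \<times> {0..<m})"
    unfolding Sigma_eq by (rule card_image[OF inj])
  also have "\<dots> = nat m * card (Sstar m S)"
    using Sstar by (simp add: card_cartesian_product finite_subset)
  finally show ?thesis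
    using Sigma_eq disjoint_family_on_images_if_inj_on[OF inj] unfolding container_1 by auto
qed

end
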